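(* The bidirected quarter-grid, the ascending cyclically directed quarter-grid, the descending cyclically directed quarter-grid, and every complete ray digraph each have precisely one end.
   Context: A ray is an orientation of a one-way infinite path with every edge oriented towards infinity; an anti-ray is one with every edge oriented away from infinity; a dipath is a directed path. For rays or anti-rays $Q,R$ write $Q\le R$ if there are infinitely many pairwise disjoint $Q$--$R$ dipaths, and $Q\sim R$ if $Q\le R$ and $R\le Q$; the ends of a digraph are the equivalence classes of $\sim$ on its rays and anti-rays. In all following definitions start with infinitely many pairwise disjoint rays $R_i=x^i_1x^i_2\ldots$ ($i\ge1$). Bidirected quarter-grid: add the edges $x^i_{4j+7}x^{i+1}_{4j+1}$ and $x^{i+1}_{4j+2}x^i_{4j+8}$ for all $j\ge 0$, $i\ge 1$, then suppress every vertex $v\in V(R_i)$ with $d^-(v)=d^+(v)=1$ all of whose neighbours lie on $R_i$. Ascending cyclically directed quarter-grid: add the edges $x^1_jx^2_j$ for all odd $j$, $x^i_{j+3}x^{i+1}_j$ for all $i\ge2$ and all odd $j$, and $x^i_2x^1_{2(i-1)}$ for all $i\ge 2$. Descending cyclically directed quarter-grid: add the edges $x^{i+1}_jx^i_{j+1}$ for all even $j$ and all $i\ge1$, and $x^1_{2i}x^{i+1}_1$ for all $i\ge 1$. Complete ray digraph: the union of the rays $R_i$ together with, for every two distinct $i,i'$, infinitely many disjoint $R_i$--$R_{i'}$ dipaths and infinitely many disjoint $R_{i'}$--$R_i$ dipaths, such that none of these dipaths meets any ray $R_j$ other than its two end rays, all these additional dipaths are pairwise disjoint, and the starting vertex of each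 $R_i$ is the end vertex of an $R_1$--$R_i$ dipath. *)

theory Defs
  imports Main
begin

text \<open>A digraph is given by a vertex set V and an arc set E (pairs (tail, head)).\<close>

definition walk_arcs :: "('a \<times> 'a) set \<Rightarrow> 'a list \<Rightarrow> bool" where
  "walk_arcs E p \<longleftrightarrow> (\<forall>k. Suc k < length p \<longrightarrow> (p ! k, p ! Suc k) \<in> E)"

definition dipath :: "'a set \<Rightarrow> ('a \<times> 'a) set \<Rightarrow> 'a list \<Rightarrow> bool" where
  "dipath V E p \<longleftrightarrow> p \<noteq> [] \<and> distinct p \<and> set p \<subseteq> V \<and> walk_arcs E p"

definition AB_dipath :: "'a set \<Rightarrow> ('a \<times> 'a) set \<Rightarrow> 'a set \<Rightarrow> 'a set \<Rightarrow> 'a list \<Rightarrow> bool" where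
  "AB_dipath V E A B p \<longleftrightarrow> dipath V E p \<and> set p \<inter> A = {hd p} \<and> set p \<inter> B = {last p}"

definition ray :: "'a set \<Rightarrow> ('a \<times> 'a) set \<Rightarrow> (nat \<Rightarrow> 'a) \<Rightarrow> bool" where
  "ray V E f \<longleftrightarrow> inj f \<and> range f \<subseteq> V \<and> (\<forall>n. (f n, f (Suc n)) \<in> E)"

definition antiray :: "'a set \<Rightarrow> ('a \<times> 'a) set \<Rightarrow> (nat \<Rightarrow> 'a) \<Rightarrow> bool" where
  "antiray V E f \<longleftrightarrow> inj f \<and> range f \<subseteq> V \<and> (\<forall>n. (f (Suc n), f n) \<in> E)"

definition rays_antirays :: "'a set \<Rightarrow> ('a \<times> 'a) set \<Rightarrow> (bool \<times> (nat \<Rightarrow> 'a)) set" where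
  "rays_antirays V E = {(True, f) | f. ray V E f} \<union> {(False, f) | f. antiray V E f}"

definition ray_le :: "'a set \<Rightarrow> ('a \<times> 'a) set \<Rightarrow> bool \<times> (nat \<Rightarrow> 'a) \<Rightarrow> bool \<times> (nat \<Rightarrow> 'a) \<Rightarrow> bool" where
  "ray_le V E Q R \<longleftrightarrow> (\<exists>P. infinite P \<and>
      (\<forall>p\<in>P. AB_dipath V E (range (snd Q)) (range (snd R)) p) \<and>
      pairwise (\<lambda>p q. set p \<inter> set q = {}) P)"

definition ray_equiv :: "'a set \<Rightarrow> ('a \<times> 'a) set \<Rightarrow> ((bool \<times> (nat \<Rightarrow> 'a)) \<times> (bool \<times> (nat \<Rightarrow> 'a))) set" where
  "ray_equiv V E = {(Q, R). Q \<in> rays_antirays V E \<and> R \<in> rays_antirays V E \<and>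
      ray_le V E Q R \<and> ray_le V E R Q}"

definition ends :: "'a set \<Rightarrow> ('a \<times> 'a) set \<Rightarrow> (bool \<times> (nat \<Rightarrow> 'a)) set set" where
  "ends V E = rays_antirays V E // ray_equiv V E"

definition indeg :: "('a \<times> 'a) set \<Rightarrow> 'a \<Rightarrow> nat" where
  "indeg E v = card {u. (u, v) \<in> E}"

definition outdeg :: "('a \<times> 'a) set \<Rightarrow> 'a \<Rightarrow> nat" where
  "outdeg E v = card {w. (v, w) \<in> E}"

definition suppress_V :: "'a set \<Rightarrow> 'a set \<Rightarrow> 'a set" where
  "suppress_V V S = V - S"

definition suppress_E :: "'a set \<Rightarrow> ('a \<times> 'a) set \<Rightarrow> 'a set \<Rightarrow> ('a \<times> 'a) set" where
  "suppress_E V E S = {(u, w). u \<in> V - S \<and> w \<in> V - S \<and>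
      (\<exists>xs. set xs \<subseteq> S \<and> walk_arcs E (u # xs @ [w]))}"

text \<open>Vertex x^i_j is the pair (i, j), with i, j \<ge> 1; the ray R_i is x^i_1 x^i_2 ...\<close>

definition qg_V :: "(nat \<times> nat) set" where
  "qg_V = {(i, j). 1 \<le> i \<and> 1 \<le> j}"

definition qg_rayE :: "((nat \<times> nat) \<times> (nat \<times> nat)) set" where
  "qg_rayE = {((i, j), (i, j + 1)) | i j. 1 \<le> i \<and> 1 \<le> j}"

definition bqg0_E :: "((nat \<times> nat) \<times> (nat \<times> nat)) set" where
  "bqg0_E = qg_rayE
     \<union> {((i, 4*j + 7), (i + 1, 4*j + 1)) | i j. 1 \<le> i}
     \<union> {((i + 1, 4*j + 2), (i, 4*j + 8)) | i j. 1 \<le> i}"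

definition bqg_S :: "(nat \<times> nat) set" where
  "bqg_S = {(i, j). (i, j) \<in> qg_V \<and> indeg bqg0_E (i, j) = 1 \<and> outdeg bqg0_E (i, j) = 1 \<and>
      (\<forall>u. (u, (i, j)) \<in> bqg0_E \<or> ((i, j), u) \<in> bqg0_E \<longrightarrow> fst u = i)}"

definition bqg_V :: "(nat \<times> nat) set" where
  "bqg_V = suppress_V qg_V bqg_S"

definition bqg_E :: "((nat \<times> nat) \<times> (nat \<times> nat)) set" where
  "bqg_E = suppress_E qg_V bqg0_E bqg_S"

definition acq_E :: "((nat \<times> nat) \<times> (nat \<times> nat)) set" where
  "acq_E = qg_rayE
     \<union> {((1, j), (2, j)) | j. odd j}
     \<union> {((i, j + 3), (i + 1, j)) | i j. 2 \<le> i \<and> odd j}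
     \<union> {((i, 2), (1, 2 * (i - 1))) | i. 2 \<le> i}"

definition dcq_E :: "((nat \<times> nat) \<times> (nat \<times> nat)) set" where
  "dcq_E = qg_rayE
     \<union> {((i + 1, j), (i, j + 1)) | i j. 1 \<le> i \<and> 1 \<le> j \<and> even j}
     \<union> {((1, 2 * i), (i + 1, 1)) | i. 1 \<le> i}"

text \<open>R i n is the vertex x^i_{n+1} of the ray R_i (i \<ge> 1). P is the family of additional dipaths.\<close>
definition complete_ray_digraph :: "'a set \<Rightarrow> ('a \<times> 'a) set \<Rightarrow> bool" where
  "complete_ray_digraph V E \<longleftrightarrow>
    (\<exists>(R :: nat \<Rightarrow> nat \<Rightarrow> 'a) (P :: 'a list set).
       (\<forall>i\<ge>1. inj (R i)) \<and>
       (\<forall>i\<ge>1. \<forall>i'\<ge>1. i \<noteq> i' \<longrightarrow> range (R i) \<inter> range (R i') = {}) \<and>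
       V = (\<Union>i\<in>{1..}. range (R i)) \<union> (\<Union>p\<in>P. set p) \<and>
       E = {(R i n, R i (Suc n)) | i n. 1 \<le> i}
           \<union> {(p ! k, p ! Suc k) | p k. p \<in> P \<and> Suc k < length p} \<and>
       (\<forall>p\<in>P. \<exists>i\<ge>1. \<exists>i'\<ge>1. i \<noteq> i' \<and> AB_dipath V E (range (R i)) (range (R i')) p \<and>
            (\<forall>j\<ge>1. j \<noteq> i \<and> j \<noteq> i' \<longrightarrow> set p \<inter> range (R j) = {})) \<and>
       pairwise (\<lambda>p q. set p \<inter> set q = {}) P \<and>
       (\<forall>i\<ge>1. \<forall>i'\<ge>1. i \<noteq> i' \<longrightarrow>
            infinite {p \<in> P. AB_dipath V E (range (R i)) (range (R i')) p}) \<and>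
       (\<forall>i\<ge>2. \<exists>p\<in>P. AB_dipath V E (range (R 1)) (range (R i)) p \<and> last p = R i 0))"

end

theory Submission
  imports Defs "HOL-Library.Infinite_Set"
begin

text \<open>A digraph with a ray or anti-ray has exactly one end as soon as, for all rays or anti-rays
  Q, R and every finite X, some vertex of Q outside X reaches R in G - X: a shortest such walk
  is a Q--R dipath, and avoiding the finitely many paths chosen so far yields infinitely many
  disjoint ones.

  In a complete ray digraph a ray or anti-ray Q either meets some R i infinitely often or meets
  infinitely many R i. Either way Q contains a vertex of some R i whose tail avoids X, and Q is
  reached from arbitrarily late vertices of some R j (of R 1 via the initial links in the second
  case); the infinitely many disjoint R i--R j dipaths, all but finitely many of which avoid X,
  connect the two.

  In the quarter-grids every vertex far from the corner reaches all late vertices of the first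
  row, and is reached from late vertices of it, along staircases that stay outside a given box;
  suppressing vertices in the bidirected quarter-grid preserves reachability between the
  remaining vertices.\<close>

lemma walk_arcs_Nil [simp]: "walk_arcs E []"
  and walk_arcs_single [simp]: "walk_arcs E [a]"
  by (simp_all add: walk_arcs_def)

lemma walk_arcs_Cons_Cons [simp]:
  "walk_arcs E (a # b # p) \<longleftrightarrow> (a, b) \<in> E \<and> walk_arcs E (b # p)"
proof
  assume H: "walk_arcs E (a # b # p)"
  have "(a, b) \<in> E"
    using H[unfolded walk_arcs_def, rule_format, of 0] by simp
  moreover have "walk_arcs E (b # p)"
    unfolding walk_arcs_def
    using H[unfolded walk_arcs_def, rule_format, of "Suc _"] by simp
  ultimately show "(a, b) \<in> E \<and> walk_arcs E (b # p)" ..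
next
  assume H: "(a, b) \<in> E \<and> walk_arcs E (b # p)"
  show "walk_arcs E (a # b # p)"
    unfolding walk_arcs_def
  proof (intro allI impI)
    fix k assume "Suc k < length (a # b # p)"
    then show "((a # b # p) ! k, (a # b # p) ! Suc k) \<in> E"
      using H unfolding walk_arcs_def by (cases k) simp_all
  qed
qed

lemma walk_arcs_append:
  "walk_arcs E (p @ q) \<longleftrightarrow>
     walk_arcs E p \<and> walk_arcs E q \<and> (p \<noteq> [] \<longrightarrow> q \<noteq> [] \<longrightarrow> (last p, hd q) \<in> E)"
proof (induction p rule: induct_list012)
  case (2 a)
  show ?case by (cases q) auto
next
  case (3 a b p)
  then show ?case by simp
qed simp

lemma rtrancl_Restr_imp_walk:
  assumes "(u, v) \<in> (Restr E W)\<^sup>*" "u \<in> W"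
  shows "\<exists>p. p \<noteq> [] \<and> hd p = u \<and> last p = v \<and> set p \<subseteq> W \<and> walk_arcs E p"
  using assms(1)
proof (induction rule: rtrancl_induct)
  case base
  show ?case using assms(2) by (intro exI[of _ "[u]"]) auto
next
  case (step w y)
  then obtain p where "p \<noteq> []" "hd p = u" "last p = w" "set p \<subseteq> W" "walk_arcs E p"
    by blast
  with step.hyps(2) show ?case
    by (intro exI[of _ "p @ [y]"]) (auto simp: walk_arcs_append)
qed

lemma walk_imp_rtrancl_Restr:
  "p \<noteq> [] \<Longrightarrow> set p \<subseteq> W \<Longrightarrow> walk_arcs E p \<Longrightarrow> (hd p, last p) \<in> (Restr E W)\<^sup>*"
proof (induction p rule: induct_list012)
  case (3 a b p)
  then have "(a, b) \<in> Restr E W" "(b, last (b # p)) \<in> (Restr E W)\<^sup>*"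
    by auto
  then have "(a, last (b # p)) \<in> (Restr E W)\<^sup>*"
    by (rule converse_rtrancl_into_rtrancl)
  then show ?case by (metis last_ConsR list.discI list.sel(1))
qed simp_all

lemma rtrancl_Restr_arc: "(a, b) \<in> E \<Longrightarrow> a \<in> W \<Longrightarrow> b \<in> W \<Longrightarrow> (a, b) \<in> (Restr E W)\<^sup>*"
  by (rule r_into_rtrancl) simp

lemma rtrancl_chain:
  assumes "n \<le> n'" "\<And>t. n \<le> t \<Longrightarrow> t < n' \<Longrightarrow> (f t, f (Suc t)) \<in> r\<^sup>*"
  shows "(f n, f n') \<in> r\<^sup>*"
  using assms by (induction n' rule: dec_induct) (auto intro: rtrancl_trans)

definition AB_walk :: "('a \<times> 'a) set \<Rightarrow> 'a set \<Rightarrow> 'a set \<Rightarrow> 'a set \<Rightarrow> 'a list \<Rightarrow> bool" where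
  "AB_walk E W A B p \<longleftrightarrow>
     p \<noteq> [] \<and> hd p \<in> A \<and> last p \<in> B \<and> set p \<subseteq> W \<and> walk_arcs E p"

lemma AB_walk_skip_loop:
  assumes "AB_walk E W A B (xs @ [y] @ ys @ [y] @ zs)"
  shows "AB_walk E W A B (xs @ [y] @ zs)"
proof -
  have "walk_arcs E (xs @ [y])" "walk_arcs E ([y] @ zs)"
    using assms walk_arcs_append[of E "xs @ [y]" "ys @ [y] @ zs"]
      walk_arcs_append[of E "xs @ [y] @ ys" "[y] @ zs"]
    by (simp_all add: AB_walk_def)
  then have "walk_arcs E ((xs @ [y]) @ zs)"
    by (cases zs) (auto simp: walk_arcs_append)
  with assms show ?thesis
    by (cases xs; cases zs) (auto simp: AB_walk_def)
qed

lemma AB_walk_suffix: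
  assumes "AB_walk E W A B (xs @ a # ys)" "a \<in> A"
  shows "AB_walk E W A B (a # ys)"
  using assms walk_arcs_append[of E xs "a # ys"] by (auto simp: AB_walk_def)

lemma AB_walk_prefix:
  assumes "AB_walk E W A B (xs @ b # ys)" "b \<in> B"
  shows "AB_walk E W A B (xs @ [b])"
  using assms walk_arcs_append[of E "xs @ [b]" ys] by (cases xs) (auto simp: AB_walk_def)

text \<open>A shortest walk from A to B is an A--B dipath: a repeated vertex, a later vertex
  in A or an earlier vertex in B would yield a shorter walk.\<close>

lemma AB_dipath_if_AB_walk:
  assumes "AB_walk E W A B p0" "W \<subseteq> V"
  shows "\<exists>p. AB_dipath V E A B p \<and> set p \<subseteq> W"
proof -
  obtain p where p: "AB_walk E W A B p"
    and shortest: "\<And>q. AB_walk E W A B q \<Longrightarrow> length p \<le> length q"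
    using ex_has_least_nat[of "AB_walk E W A B" p0 length] assms(1) by blast
  have "distinct p"
  proof (rule ccontr)
    assume "\<not> distinct p"
    then obtain xs y ys zs where "p = xs @ [y] @ ys @ [y] @ zs"
      using not_distinct_decomp by blast
    with p shortest[OF AB_walk_skip_loop] show False by fastforce
  qed
  moreover have "set p \<inter> A = {hd p}"
  proof (rule ccontr)
    assume "set p \<inter> A \<noteq> {hd p}"
    then obtain a where a: "a \<in> set p" "a \<in> A" "a \<noteq> hd p"
      using p by (auto simp: AB_walk_def)
    then obtain xs ys where p_eq: "p = xs @ a # ys"
      by (meson split_list)
    with a have "xs \<noteq> []" by auto
    with p p_eq a shortest[OF AB_walk_suffix] show False by fastforce
  qed
  moreover have "set p \<inter> B = {last p}"
  proof (rule ccontr)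
    assume "set p \<inter> B \<noteq> {last p}"
    then obtain b where b: "b \<in> set p" "b \<in> B" "b \<noteq> last p"
      using p by (auto simp: AB_walk_def)
    then obtain xs ys where p_eq: "p = xs @ b # ys"
      by (meson split_list)
    with b have "ys \<noteq> []" by auto
    with p p_eq b shortest[OF AB_walk_prefix] show False by fastforce
  qed
  ultimately show ?thesis
    using p assms(2) by (intro exI[of _ p]) (auto simp: AB_walk_def AB_dipath_def dipath_def)
qed

section \<open>A criterion for a single end\<close>

lemma infinite_disjoint_family_if_avoidable:
  assumes avoid: "\<And>X. finite X \<Longrightarrow> \<exists>p. Pr p \<and> set p \<inter> X = {}"
    and nonempty: "\<And>p. Pr p \<Longrightarrow> p \<noteq> []"
  shows "\<exists>P. infinite P \<and> (\<forall>p\<in>P. Pr p) \<and> pairwise (\<lambda>p q. set p \<inter> set q = {}) P"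
proof -
  define pick where "pick X = (SOME p. Pr p \<and> set p \<inter> X = {})" for X
  define used where "used n = rec_nat {} (\<lambda>_ U. U \<union> set (pick U)) n" for n
  define p where "p n = pick (used n)" for n
  have used_Suc: "used (Suc n) = used n \<union> set (p n)" for n
    by (simp add: used_def p_def)
  have "finite (used n)" for n
    by (induction n) (simp_all add: used_Suc, simp add: used_def)
  then have p: "Pr (p n) \<and> set (p n) \<inter> used n = {}" for n
    unfolding p_def pick_def by (rule someI_ex[OF avoid])
  have used_mono: "used m \<subseteq> used n" if "m \<le> n" for m n
    using that by (induction n rule: dec_induct) (auto simp: used_Suc)
  have disjoint: "set (p m) \<inter> set (p n) = {}" if "m < n" for m n
    using p[of n] used_Suc[of m] used_mono[of "Suc m" n] that by auto
  have disjoint': "set (p m) \<inter> set (p n) = {}" if "m \<noteq> n" for m n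
    using disjoint[of m n] disjoint[of n m] that by (cases "m < n") auto
  have "inj p"
  proof (rule injI)
    fix m n assume eq: "p m = p n"
    show "m = n"
    proof (rule ccontr)
      assume "m \<noteq> n"
      with eq disjoint'[of m n] have "p m = []" by simp
      with nonempty p show False by blast
    qed
  qed
  then have "infinite (range p)"
    using finite_imageD[of p UNIV] by auto
  moreover have "pairwise (\<lambda>p q. set p \<inter> set q = {}) (range p)"
    by (rule pairwise_imageI) (use disjoint' in blast)
  moreover have "\<forall>q\<in>range p. Pr q"
    using p by blast
  ultimately show ?thesis
    by blast
qed

lemma finite_members_meeting_if_disjoint:
  assumes "\<And>a b. a \<in> I \<Longrightarrow> b \<in> I \<Longrightarrow> a \<noteq> b \<Longrightarrow> F a \<inter> F b = {}" "finite Y"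
  shows "finite {a\<in>I. F a \<inter> Y \<noteq> {}}"
proof -
  define g where "g a = (SOME y. y \<in> F a \<inter> Y)" for a
  have g: "g a \<in> F a \<inter> Y" if "a \<in> {a\<in>I. F a \<inter> Y \<noteq> {}}" for a
  proof -
    from that obtain y where "y \<in> F a \<inter> Y" by blast
    then show ?thesis unfolding g_def by (rule someI)
  qed
  have "inj_on g {a\<in>I. F a \<inter> Y \<noteq> {}}"
  proof (rule inj_onI)
    fix a b
    assume a: "a \<in> {a\<in>I. F a \<inter> Y \<noteq> {}}" and b: "b \<in> {a\<in>I. F a \<inter> Y \<noteq> {}}"
      and "g a = g b"
    then have "F a \<inter> F b \<noteq> {}"
      using g[OF a] g[OF b] by auto
    with a b assms(1) show "a = b" by blast
  qed
  moreover have "g ` {a\<in>I. F a \<inter> Y \<noteq> {}} \<subseteq> Y"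
    using g by blast
  ultimately show ?thesis
    using inj_on_finite assms(2) by blast
qed

lemma rays_antiraysD:
  assumes "Q \<in> rays_antirays V E"
  shows "inj (snd Q)" "range (snd Q) \<subseteq> V"
    "(snd Q n, snd Q (Suc n)) \<in> E \<or> (snd Q (Suc n), snd Q n) \<in> E"
  using assms by (auto simp: rays_antirays_def ray_def antiray_def)

lemma infinite_range_rays_antirays:
  assumes "Q \<in> rays_antirays V E"
  shows "infinite (range (snd Q))"
proof
  assume "finite (range (snd Q))"
  then have "finite (UNIV :: nat set)"
    using finite_imageD rays_antiraysD(1)[OF assms] by blast
  then show False by simp
qed

lemma rays_antirays_avoid_finite:
  assumes "Q \<in> rays_antirays V E" "finite Y"
  shows "\<exists>w\<in>range (snd Q). w \<notin> Y"
proof (rule ccontr)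
  assume "\<not> ?thesis"
  then have "range (snd Q) \<subseteq> Y"
    by blast
  with assms show False
    using infinite_range_rays_antirays finite_subset by blast
qed

lemma ray_leI:
  assumes "\<And>X. finite X \<Longrightarrow>
    \<exists>u\<in>range (snd Q). \<exists>v\<in>range (snd R). u \<in> V - X \<and> (u, v) \<in> (Restr E (V - X))\<^sup>*"
  shows "ray_le V E Q R"
proof -
  let ?Pr = "AB_dipath V E (range (snd Q)) (range (snd R))"
  have "\<exists>p. ?Pr p \<and> set p \<inter> X = {}" if "finite X" for X
  proof -
    obtain u v where uv: "u \<in> range (snd Q)" "v \<in> range (snd R)" "u \<in> V - X"
      and "(u, v) \<in> (Restr E (V - X))\<^sup>*"
      using assms[OF \<open>finite X\<close>] by blast
    then obtain w where "w \<noteq> []" "hd w = u" "last w = v" "set w \<subseteq> V - X" "walk_arcs E w"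
      using rtrancl_Restr_imp_walk by metis
    with uv have "AB_walk E (V - X) (range (snd Q)) (range (snd R)) w"
      by (simp add: AB_walk_def)
    then obtain p where "?Pr p" "set p \<subseteq> V - X"
      using AB_dipath_if_AB_walk[of E "V - X"] by blast
    then show ?thesis by blast
  qed
  moreover have "?Pr p \<Longrightarrow> p \<noteq> []" for p
    by (simp add: AB_dipath_def dipath_def)
  ultimately show ?thesis
    unfolding ray_le_def by (rule infinite_disjoint_family_if_avoidable)
qed

lemma card_ends_eq_1I:
  assumes "rays_antirays V E \<noteq> {}"
    and "\<And>Q R X. Q \<in> rays_antirays V E \<Longrightarrow> R \<in> rays_antirays V E \<Longrightarrow> finite X \<Longrightarrow>
      \<exists>u\<in>range (snd Q). \<exists>v\<in>range (snd R). u \<in> V - X \<and> (u, v) \<in> (Restr E (V - X))\<^sup>*"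
  shows "card (ends V E) = 1"
proof -
  have "ray_le V E Q R" if "Q \<in> rays_antirays V E" "R \<in> rays_antirays V E" for Q R
    using assms(2)[OF that] by (rule ray_leI)
  then have "ray_equiv V E = rays_antirays V E \<times> rays_antirays V E"
    by (auto simp: ray_equiv_def)
  then have "ends V E = {rays_antirays V E}"
    using assms(1) by (auto simp: ends_def quotient_def)
  then show ?thesis by simp
qed

section \<open>Complete ray digraphs\<close>

lemma infinite_vimage_if_infinite_Int_range:
  assumes "infinite (S \<inter> range h)"
  shows "infinite {n. h n \<in> S}"
proof
  assume "finite {n. h n \<in> S}"
  moreover have "S \<inter> range h \<subseteq> h ` {n. h n \<in> S}"
    by auto
  ultimately show False
    using assms finite_surj by blast
qed

text \<open>The parts of \<^const>\<open>complete_ray_digraph\<close> used below.\<close>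

locale complete_ray_structure =
  fixes V :: "'a set" and E :: "('a \<times> 'a) set" and R :: "nat \<Rightarrow> nat \<Rightarrow> 'a" and P :: "'a list set"
  assumes ray_inj: "\<And>i. i \<ge> 1 \<Longrightarrow> inj (R i)"
    and rays_disjoint: "\<And>i i'. i \<ge> 1 \<Longrightarrow> i' \<ge> 1 \<Longrightarrow> i \<noteq> i' \<Longrightarrow> range (R i) \<inter> range (R i') = {}"
    and V_eq: "V = (\<Union>i\<in>{1..}. range (R i)) \<union> (\<Union>p\<in>P. set p)"
    and E_eq: "E = {(R i n, R i (Suc n)) | i n. 1 \<le> i}
                  \<union> {(p ! k, p ! Suc k) | p k. p \<in> P \<and> Suc k < length p}"
    and paths_disjoint: "pairwise (\<lambda>p q. set p \<inter> set q = {}) P"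
    and infinitely_many_links: "\<And>i i'. i \<ge> 1 \<Longrightarrow> i' \<ge> 1 \<Longrightarrow> i \<noteq> i' \<Longrightarrow>
      infinite {p \<in> P. AB_dipath V E (range (R i)) (range (R i')) p}"
    and initial_link_exists: "\<And>i. i \<ge> 2 \<Longrightarrow>
      \<exists>p\<in>P. AB_dipath V E (range (R 1)) (range (R i)) p \<and> last p = R i 0"

lemma complete_ray_structure_if_complete_ray_digraph:
  "complete_ray_digraph V E \<Longrightarrow> \<exists>R P. complete_ray_structure V E R P"
  unfolding complete_ray_digraph_def
proof (elim exE conjE)
  fix R :: "nat \<Rightarrow> nat \<Rightarrow> 'a" and P :: "'a list set"
  assume "\<forall>i\<ge>1. inj (R i)" "\<forall>i\<ge>1. \<forall>i'\<ge>1. i \<noteq> i' \<longrightarrow> range (R i) \<inter> range (R i') = {}"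
    "pairwise (\<lambda>p q. set p \<inter> set q = {}) P"
    "\<forall>i\<ge>1. \<forall>i'\<ge>1. i \<noteq> i' \<longrightarrow> infinite {p \<in> P. AB_dipath V E (range (R i)) (range (R i')) p}"
    "\<forall>i\<ge>2. \<exists>p\<in>P. AB_dipath V E (range (R 1)) (range (R i)) p \<and> last p = R i 0"
    "V = (\<Union>i\<in>{1..}. range (R i)) \<union> (\<Union>p\<in>P. set p)"
    "E = {(R i n, R i (Suc n)) | i n. 1 \<le> i} \<union> {(p ! k, p ! Suc k) | p k. p \<in> P \<and> Suc k < length p}"
  then show ?thesis
    unfolding complete_ray_structure_def by (intro exI[of _ R] exI[of _ P]) simp
qed

context complete_ray_structure
begin

lemma ray_in_V: "i \<ge> 1 \<Longrightarrow> R i n \<in> V"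
  using V_eq by auto

lemma ray_arc: "i \<ge> 1 \<Longrightarrow> (R i n, R i (Suc n)) \<in> E"
  using E_eq by blast

lemma path_in_V: "p \<in> P \<Longrightarrow> set p \<subseteq> V"
  using V_eq by auto

lemma walk_arcs_path: "p \<in> P \<Longrightarrow> walk_arcs E p"
  unfolding walk_arcs_def E_eq by blast

lemma paths_disjointD: "p \<in> P \<Longrightarrow> q \<in> P \<Longrightarrow> p \<noteq> q \<Longrightarrow> set p \<inter> set q = {}"
  using paths_disjoint unfolding pairwise_def by blast

lemma finite_paths_meeting: "finite Y \<Longrightarrow> finite {p\<in>P. set p \<inter> Y \<noteq> {}}"
  by (rule finite_members_meeting_if_disjoint) (use paths_disjointD in blast)

lemma finite_rays_meeting: "finite Y \<Longrightarrow> finite {i\<in>{1..}. range (R i) \<inter> Y \<noteq> {}}"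
  by (rule finite_members_meeting_if_disjoint) (use rays_disjoint in auto)

lemma ray_tail_avoids:
  assumes "finite X" "i \<ge> 1"
  shows "\<exists>m. \<forall>t\<ge>m. R i t \<notin> X"
proof -
  have "finite (R i -` X)"
    using finite_vimageI[OF assms(1)] ray_inj[OF assms(2)] by blast
  then obtain m where "\<forall>t \<in> R i -` X. t \<le> m"
    using finite_nat_set_iff_bounded_le by blast
  then show ?thesis by (intro exI[of _ "Suc m"]) force
qed

lemma reach_along_ray:
  assumes "i \<ge> 1" "\<forall>t\<ge>n. R i t \<notin> X" "n \<le> n'"
  shows "(R i n, R i n') \<in> (Restr E (V - X))\<^sup>*"
  using assms(3) by (rule rtrancl_chain) (use assms ray_arc ray_in_V in \<open>auto intro: r_into_rtrancl\<close>)

lemma reach_along_path: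
  assumes "p \<in> P" "p \<noteq> []" "set p \<inter> X = {}"
  shows "(hd p, last p) \<in> (Restr E (V - X))\<^sup>*"
  using assms path_in_V walk_arcs_path by (intro walk_imp_rtrancl_Restr) auto

text \<open>Among the infinitely many links between the two rays only finitely many meet X or start
  or end too early.\<close>

lemma reach_late_ray_vertices:
  assumes X: "finite X" and i: "i \<ge> 1" and i': "i' \<ge> 1" and tail: "\<forall>t\<ge>n. R i t \<notin> X"
  shows "\<exists>K. \<forall>n'\<ge>K. (R i n, R i' n') \<in> (Restr E (V - X))\<^sup>*"
proof (cases "i = i'")
  case True
  then show ?thesis
    using reach_along_ray[OF i tail] by blast
next
  case False
  obtain m' where tail': "\<forall>t\<ge>m'. R i' t \<notin> X"
    using ray_tail_avoids[OF X i'] by blast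
  let ?links = "{p \<in> P. AB_dipath V E (range (R i)) (range (R i')) p}"
  let ?bad = "{p\<in>P. set p \<inter> (X \<union> R i ` {..<n} \<union> R i' ` {..<m'}) \<noteq> {}}"
  have "infinite (?links - ?bad)"
    using infinitely_many_links[OF i i' False] finite_paths_meeting[of "X \<union> R i ` {..<n} \<union> R i' ` {..<m'}"] X
    by (simp add: Diff_infinite_finite)
  then obtain p where p: "p \<in> ?links" "p \<notin> ?bad"
    using infinite_imp_nonempty by blast
  then have "p \<noteq> []" "hd p \<in> range (R i)" "last p \<in> range (R i')"
    by (auto simp: AB_dipath_def dipath_def)
  then obtain h k where hk: "hd p = R i h" "last p = R i' k"
    by blast
  moreover have "hd p \<in> set p" "last p \<in> set p"
    using \<open>p \<noteq> []\<close> by simp_all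
  ultimately have "\<not> h < n" "\<not> k < m'" "set p \<inter> X = {}"
    using p by auto
  then have "n \<le> h" "m' \<le> k"
    by simp_all
  have "(R i n, R i' n') \<in> (Restr E (V - X))\<^sup>*" if "k \<le> n'" for n'
  proof -
    have "(R i n, R i h) \<in> (Restr E (V - X))\<^sup>*"
      using reach_along_ray[OF i tail \<open>n \<le> h\<close>] .
    also have "(R i h, R i' k) \<in> (Restr E (V - X))\<^sup>*"
      using reach_along_path[of p X] p \<open>p \<noteq> []\<close> \<open>set p \<inter> X = {}\<close> hk by auto
    also have "(R i' k, R i' n') \<in> (Restr E (V - X))\<^sup>*"
      using reach_along_ray[OF i'] tail' \<open>m' \<le> k\<close> that by auto
    finally show ?thesis .
  qed
  then show ?thesis by blast
qed

lemma arc_off_rays_in_path: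
  assumes "(a, b) \<in> E" "a \<notin> (\<Union>i\<in>{1..}. range (R i)) \<or> b \<notin> (\<Union>i\<in>{1..}. range (R i))"
  shows "\<exists>p\<in>P. a \<in> set p \<and> b \<in> set p"
proof -
  obtain p k where "p \<in> P" "Suc k < length p" "a = p ! k" "b = p ! Suc k"
    using assms unfolding E_eq by blast
  then show ?thesis by (intro bexI[of _ p]) auto
qed

lemma tail_off_rays_in_path:
  assumes Q: "Q \<in> rays_antirays V E" and off: "\<And>t. t > n0 \<Longrightarrow> snd Q t \<notin> (\<Union>i\<in>{1..}. range (R i))"
  shows "\<exists>p\<in>P. \<forall>k. snd Q (Suc n0 + k) \<in> set p"
proof -
  have "snd Q (Suc n0) \<in> V"
    using rays_antiraysD(2)[OF Q] by blast
  then have "snd Q (Suc n0) \<in> (\<Union>p\<in>P. set p)"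
    using off[of "Suc n0"] unfolding V_eq by blast
  then obtain p where p: "p \<in> P" "snd Q (Suc n0) \<in> set p"
    by blast
  have "snd Q (Suc n0 + k) \<in> set p" for k
  proof (induction k)
    case (Suc k)
    obtain q where q: "q \<in> P" "snd Q (Suc n0 + k) \<in> set q" "snd Q (Suc (Suc n0 + k)) \<in> set q"
      using rays_antiraysD(3)[OF Q, of "Suc n0 + k"] off[of "Suc n0 + k"] arc_off_rays_in_path
      by force
    with Suc p have "q = p"
      using paths_disjointD by blast
    with q show ?case by simp
  qed (use p in simp)
  with p show ?thesis
    by blast
qed

lemma infinite_ray_antiray_Int_rays:
  assumes Q: "Q \<in> rays_antirays V E"
  shows "infinite (range (snd Q) \<inter> (\<Union>i\<in>{1..}. range (R i)))"
proof
  let ?f = "snd Q" and ?RV = "\<Union>i\<in>{1..}. range (R i)"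
  assume "finite (range ?f \<inter> ?RV)"
  then have "finite (?f -` (range ?f \<inter> ?RV))"
    using finite_vimageI rays_antiraysD(1)[OF Q] by blast
  moreover have "?f -` (range ?f \<inter> ?RV) = ?f -` ?RV"
    by auto
  ultimately obtain n0 where "\<And>t. t > n0 \<Longrightarrow> ?f t \<notin> ?RV"
    using finite_nat_set_iff_bounded_le by (metis vimageI2 not_le)
  then obtain p where "\<forall>k. ?f (Suc n0 + k) \<in> set p"
    using tail_off_rays_in_path[OF Q] by blast
  then have "range (\<lambda>k. ?f (Suc n0 + k)) \<subseteq> set p"
    by auto
  moreover have "inj (\<lambda>k. ?f (Suc n0 + k))"
  proof (rule injI)
    fix x y assume "?f (Suc n0 + x) = ?f (Suc n0 + y)"
    then have "Suc n0 + x = Suc n0 + y"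
      by (rule injD[OF rays_antiraysD(1)[OF Q]])
    then show "x = y" by simp
  qed
  ultimately show False
    using finite_subset finite_imageD[of "\<lambda>k. ?f (Suc n0 + k)" UNIV] by auto
qed

lemma meets_infinitely_many_rays:
  assumes Q: "Q \<in> rays_antirays V E"
    and finite_meets: "\<And>i. i \<ge> 1 \<Longrightarrow> finite (range (snd Q) \<inter> range (R i))"
  shows "infinite {i. i \<ge> 1 \<and> range (snd Q) \<inter> range (R i) \<noteq> {}}"
proof
  let ?I = "{i. i \<ge> 1 \<and> range (snd Q) \<inter> range (R i) \<noteq> {}}"
  assume "finite ?I"
  then have "finite (\<Union>i\<in>?I. range (snd Q) \<inter> range (R i))"
    using finite_meets by blast
  moreover have "range (snd Q) \<inter> (\<Union>i\<in>{1..}. range (R i)) \<subseteq> (\<Union>i\<in>?I. range (snd Q) \<inter> range (R i))"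
    by auto
  ultimately show False
    using infinite_ray_antiray_Int_rays[OF Q] finite_subset by blast
qed

lemma ray_antiray_meets_avoiding_ray_tail:
  assumes Q: "Q \<in> rays_antirays V E" and X: "finite X"
  shows "\<exists>i n. i \<ge> 1 \<and> R i n \<in> range (snd Q) \<and> (\<forall>t\<ge>n. R i t \<notin> X)"
proof (cases "\<exists>i\<ge>1. infinite (range (snd Q) \<inter> range (R i))")
  case True
  then obtain i where i: "i \<ge> 1" "infinite {n. R i n \<in> range (snd Q)}"
    using infinite_vimage_if_infinite_Int_range by blast
  obtain m where m: "\<forall>t\<ge>m. R i t \<notin> X"
    using ray_tail_avoids[OF X i(1)] by blast
  obtain n where "n \<ge> m" "R i n \<in> range (snd Q)"
    using i(2) unfolding infinite_nat_iff_unbounded_le by blast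
  with i(1) m show ?thesis
    by (intro exI[of _ i] exI[of _ n]) auto
next
  case False
  then have "infinite {i. i \<ge> 1 \<and> range (snd Q) \<inter> range (R i) \<noteq> {}}"
    by (intro meets_infinitely_many_rays[OF Q]) auto
  then have "infinite ({i. i \<ge> 1 \<and> range (snd Q) \<inter> range (R i) \<noteq> {}}
      - {i\<in>{1..}. range (R i) \<inter> X \<noteq> {}})"
    using finite_rays_meeting[OF X] by (rule Diff_infinite_finite[rotated])
  then obtain i where "i \<in> {i. i \<ge> 1 \<and> range (snd Q) \<inter> range (R i) \<noteq> {}}
      - {i\<in>{1..}. range (R i) \<inter> X \<noteq> {}}"
    by (rule exE[OF ex_in_conv[THEN iffD2, OF infinite_imp_nonempty]])
  then have i: "i \<ge> 1" "range (snd Q) \<inter> range (R i) \<noteq> {}" "range (R i) \<inter> X = {}"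
    by auto
  then obtain n where "R i n \<in> range (snd Q)"
    by (auto simp: disjoint_iff) (metis rangeI)
  with i show ?thesis
    by blast
qed

definition initial_link :: "nat \<Rightarrow> 'a list" where
  "initial_link i = (SOME p. p \<in> P \<and> AB_dipath V E (range (R 1)) (range (R i)) p \<and> last p = R i 0)"

lemma initial_linkD:
  assumes "i \<ge> 2"
  shows "initial_link i \<in> P" "AB_dipath V E (range (R 1)) (range (R i)) (initial_link i)"
    "last (initial_link i) = R i 0"
  using someI_ex[OF initial_link_exists[OF assms, unfolded Bex_def]] unfolding initial_link_def
  by blast+

lemma initial_links_disjoint:
  assumes "a \<in> {2..}" "b \<in> {2..}" "a \<noteq> b"
  shows "set (initial_link a) \<inter> set (initial_link b) = {}"
proof -
  have "R a 0 \<noteq> R b 0"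
    using rays_disjoint[of a b] assms by auto
  then have "initial_link a \<noteq> initial_link b"
    using initial_linkD(3)[of a] initial_linkD(3)[of b] assms by auto
  then show ?thesis
    using paths_disjointD initial_linkD(1) assms by auto
qed

text \<open>All but finitely many initial links avoid X and start late on R 1.\<close>

lemma reached_from_late_vertices_of_R1:
  assumes Q: "Q \<in> rays_antirays V E" and X: "finite X"
    and many: "infinite {i. i \<ge> 1 \<and> range (snd Q) \<inter> range (R i) \<noteq> {}}"
  shows "\<exists>n\<ge>K. \<exists>v\<in>range (snd Q). (R 1 n, v) \<in> (Restr E (V - X))\<^sup>*"
proof -
  let ?Y = "X \<union> R 1 ` {..<K}"
  let ?J = "{i\<in>{1..}. range (R i) \<inter> X \<noteq> {}} \<union> {i\<in>{2..}. set (initial_link i) \<inter> ?Y \<noteq> {}}"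
  have "finite {i\<in>{2..}. set (initial_link i) \<inter> ?Y \<noteq> {}}"
    using initial_links_disjoint X by (intro finite_members_meeting_if_disjoint) auto
  then have "finite (?J \<union> {1})"
    using finite_rays_meeting[OF X] by blast
  with many have "infinite ({i. i \<ge> 1 \<and> range (snd Q) \<inter> range (R i) \<noteq> {}} - (?J \<union> {1}))"
    by (rule Diff_infinite_finite[rotated])
  then obtain i where "i \<in> {i. i \<ge> 1 \<and> range (snd Q) \<inter> range (R i) \<noteq> {}} - (?J \<union> {1})"
    by (rule exE[OF ex_in_conv[THEN iffD2, OF infinite_imp_nonempty]])
  then have i: "i \<ge> 2" "range (snd Q) \<inter> range (R i) \<noteq> {}"
    "range (R i) \<inter> X = {}" "set (initial_link i) \<inter> ?Y = {}"
    by auto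
  then obtain k where k: "R i k \<in> range (snd Q)"
    by (auto simp: disjoint_iff) (metis rangeI)
  note link = initial_linkD[OF i(1)]
  have "initial_link i \<noteq> []" "hd (initial_link i) \<in> range (R 1)"
    using link(2) by (auto simp: AB_dipath_def dipath_def)
  then obtain h where h: "hd (initial_link i) = R 1 h"
    by blast
  have "K \<le> h"
    using i(4) h hd_in_set[OF \<open>initial_link i \<noteq> []\<close>] by (auto simp: not_le[symmetric])
  have "(R 1 h, R i 0) \<in> (Restr E (V - X))\<^sup>*"
    using reach_along_path[OF link(1) \<open>initial_link i \<noteq> []\<close>] i(4) h link(3) by auto
  also have "(R i 0, R i k) \<in> (Restr E (V - X))\<^sup>*"
    using reach_along_ray[of i 0 X k] i by auto
  finally show ?thesis
    using \<open>K \<le> h\<close> k by blast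
qed

lemma ray_antiray_reached_from_late_ray_vertices:
  assumes Q: "Q \<in> rays_antirays V E" and X: "finite X"
  shows "\<exists>i\<ge>1. \<forall>K. \<exists>n\<ge>K. \<exists>v\<in>range (snd Q). (R i n, v) \<in> (Restr E (V - X))\<^sup>*"
proof (cases "\<exists>i\<ge>1. infinite (range (snd Q) \<inter> range (R i))")
  case True
  then obtain i where "i \<ge> 1" "infinite {n. R i n \<in> range (snd Q)}"
    using infinite_vimage_if_infinite_Int_range by blast
  then show ?thesis
    unfolding infinite_nat_iff_unbounded_le by blast
next
  case False
  then have "infinite {i. i \<ge> 1 \<and> range (snd Q) \<inter> range (R i) \<noteq> {}}"
    by (intro meets_infinitely_many_rays[OF Q]) auto
  then show ?thesis
    using reached_from_late_vertices_of_R1[OF Q X] by (intro exI[of _ 1]) simp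
qed

lemma card_ends_eq_1: "card (ends V E) = 1"
proof (rule card_ends_eq_1I)
  have "ray V E (R 1)"
    using ray_inj ray_in_V ray_arc by (auto simp: ray_def)
  then show "rays_antirays V E \<noteq> {}"
    by (auto simp: rays_antirays_def)
next
  fix Q Q' and X :: "'a set"
  assume Q: "Q \<in> rays_antirays V E" and Q': "Q' \<in> rays_antirays V E" and X: "finite X"
  obtain i n where i: "i \<ge> 1" "R i n \<in> range (snd Q)" "\<forall>t\<ge>n. R i t \<notin> X"
    using ray_antiray_meets_avoiding_ray_tail[OF Q X] by blast
  obtain i' where i': "i' \<ge> 1" "\<forall>K. \<exists>n\<ge>K. \<exists>v\<in>range (snd Q'). (R i' n, v) \<in> (Restr E (V - X))\<^sup>*"
    using ray_antiray_reached_from_late_ray_vertices[OF Q' X] by blast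
  obtain K where K: "\<forall>n'\<ge>K. (R i n, R i' n') \<in> (Restr E (V - X))\<^sup>*"
    using reach_late_ray_vertices[OF X i(1) i'(1) i(3)] by blast
  obtain n' v where "n' \<ge> K" "v \<in> range (snd Q')" "(R i' n', v) \<in> (Restr E (V - X))\<^sup>*"
    using i'(2) by blast
  with K have "(R i n, v) \<in> (Restr E (V - X))\<^sup>*"
    by (meson rtrancl_trans)
  moreover have "R i n \<in> V - X"
    using i ray_in_V by auto
  ultimately show "\<exists>u\<in>range (snd Q). \<exists>v\<in>range (snd Q'). u \<in> V - X \<and> (u, v) \<in> (Restr E (V - X))\<^sup>*"
    using i(2) \<open>v \<in> range (snd Q')\<close> by blast
qed

end

lemma card_ends_complete_ray_digraph:
  "complete_ray_digraph V E \<Longrightarrow> card (ends V E) = 1"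
  using complete_ray_structure_if_complete_ray_digraph complete_ray_structure.card_ends_eq_1 by blast

section \<open>Quarter-grids\<close>

definition grid_beyond :: "nat \<Rightarrow> (nat \<times> nat) set" where
  "grid_beyond N = qg_V - {..N} \<times> {..N}"

lemma mem_grid_beyond [simp]:
  "(i, j) \<in> grid_beyond N \<longleftrightarrow> 1 \<le> i \<and> 1 \<le> j \<and> (N < i \<or> N < j)"
  by (auto simp: grid_beyond_def qg_V_def)

lemma row_reach:
  assumes "qg_rayE \<subseteq> E" "(i, j) \<in> grid_beyond N" "j \<le> j'"
  shows "((i, j), (i, j')) \<in> (Restr E (grid_beyond N))\<^sup>*"
  using assms(3)
proof (rule rtrancl_chain[where f = "\<lambda>t. (i, t)"])
  fix t assume "j \<le> t"
  with assms(2) have "((i, t), (i, Suc t)) \<in> qg_rayE" "(i, t) \<in> grid_beyond N" "(i, Suc t) \<in> grid_beyond N"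
    by (auto simp: qg_rayE_def)
  with assms(1) show "((i, t), (i, Suc t)) \<in> (Restr E (grid_beyond N))\<^sup>*"
    by (auto intro: rtrancl_Restr_arc)
qed

lemma finite_subset_square:
  assumes "finite (X :: (nat \<times> nat) set)"
  shows "\<exists>N. X \<subseteq> {..N} \<times> {..N}"
proof -
  obtain N where "\<forall>x \<in> fst ` X \<union> snd ` X. x \<le> N"
    using assms finite_nat_set_iff_bounded_le[of "fst ` X \<union> snd ` X"] by blast
  then have "X \<subseteq> {..N} \<times> {..N}"
    by force
  then show ?thesis ..
qed

lemma reach_far_if_linked_to_row_1:
  assumes to_row: "\<And>i j. (i, j) \<in> grid_beyond (3*N+3) \<Longrightarrow>
      \<exists>c0. \<forall>c\<ge>c0. ((i, j), (1, c)) \<in> (Restr E (grid_beyond N))\<^sup>*"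
    and from_row: "\<And>i j. (i, j) \<in> grid_beyond (3*N+3) \<Longrightarrow>
      \<exists>c. i + j \<le> 2*c + 5 \<and> ((1, c), (i, j)) \<in> (Restr E (grid_beyond N))\<^sup>*"
    and u: "u \<in> grid_beyond (3*N+3)"
  shows "\<exists>M. \<forall>v\<in>grid_beyond M. (u, v) \<in> (Restr E (grid_beyond N))\<^sup>*"
proof -
  obtain c0 where c0: "\<forall>c\<ge>c0. (u, (1, c)) \<in> (Restr E (grid_beyond N))\<^sup>*"
    using u to_row[of "fst u" "snd u"] by auto
  have "(u, (i, j)) \<in> (Restr E (grid_beyond N))\<^sup>*"
    if "(i, j) \<in> grid_beyond (max (3*N+3) (2*c0+5))" for i j
  proof -
    have "(i, j) \<in> grid_beyond (3*N+3)"
      using that by auto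
    then obtain c where c: "i + j \<le> 2*c + 5" "((1, c), (i, j)) \<in> (Restr E (grid_beyond N))\<^sup>*"
      using from_row by blast
    with that have "c0 \<le> c"
      by auto
    with c0 have "(u, (1, c)) \<in> (Restr E (grid_beyond N))\<^sup>*"
      by blast
    with c(2) show ?thesis
      by (rule rtrancl_trans[rotated])
  qed
  then show ?thesis
    by (intro exI[of _ "max (3*N+3) (2*c0+5)"]) auto
qed

lemma card_ends_eq_1_if_far_reachable:
  fixes V :: "(nat \<times> nat) set" and E E' :: "((nat \<times> nat) \<times> (nat \<times> nat)) set"
  assumes V: "V \<subseteq> qg_V" and nonempty: "rays_antirays V E' \<noteq> {}"
    and far: "\<And>N u. u \<in> grid_beyond (3*N+3) \<Longrightarrow>
      \<exists>M. \<forall>v\<in>grid_beyond M. (u, v) \<in> (Restr E (grid_beyond N))\<^sup>*"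
    and lift: "\<And>N u v. u \<in> V \<Longrightarrow> v \<in> V \<Longrightarrow> (u, v) \<in> (Restr E (grid_beyond N))\<^sup>* \<Longrightarrow>
      (u, v) \<in> (Restr E' (V - {..N} \<times> {..N}))\<^sup>*"
  shows "card (ends V E') = 1"
proof (rule card_ends_eq_1I[OF nonempty])
  fix Q R and X :: "(nat \<times> nat) set"
  assume Q: "Q \<in> rays_antirays V E'" and R: "R \<in> rays_antirays V E'" and "finite X"
  then obtain N where N: "X \<subseteq> {..N} \<times> {..N}"
    using finite_subset_square by blast
  have box: "finite ({..M} \<times> {..M})" for M :: nat
    by simp
  have beyond: "w \<in> grid_beyond M" if "w \<in> range (snd S)" "w \<notin> {..M} \<times> {..M}"
    "S \<in> rays_antirays V E'" for w S M
    using that V rays_antiraysD(2)[OF that(3)] by (auto simp: grid_beyond_def)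
  obtain u where u: "u \<in> range (snd Q)" "u \<notin> {..3*N+3} \<times> {..3*N+3}"
    using rays_antirays_avoid_finite[OF Q box] by blast
  then obtain M where M: "\<forall>v\<in>grid_beyond M. (u, v) \<in> (Restr E (grid_beyond N))\<^sup>*"
    using far beyond Q by blast
  obtain v where v: "v \<in> range (snd R)" "v \<notin> {..M} \<times> {..M}"
    using rays_antirays_avoid_finite[OF R box] by blast
  have "u \<in> V" "v \<in> V"
    using u v rays_antiraysD(2)[OF Q] rays_antiraysD(2)[OF R] by auto
  then have "(u, v) \<in> (Restr E' (V - {..N} \<times> {..N}))\<^sup>*"
    using lift M beyond[OF v R] by blast
  moreover have "Restr E' (V - {..N} \<times> {..N}) \<subseteq> Restr E' (V - X)"
    using N by auto
  ultimately have "(u, v) \<in> (Restr E' (V - X))\<^sup>*"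
    using rtrancl_mono by blast
  moreover have "u \<in> V - X"
    using \<open>u \<in> V\<close> u(2) N by auto
  ultimately show "\<exists>u\<in>range (snd Q). \<exists>v\<in>range (snd R). u \<in> V - X \<and> (u, v) \<in> (Restr E' (V - X))\<^sup>*"
    using u(1) v(1) by blast
qed

lemma row_1_ray_qg_V:
  assumes "qg_rayE \<subseteq> E"
  shows "(True, \<lambda>n. (1, Suc n)) \<in> rays_antirays qg_V E"
  using assms by (auto simp: rays_antirays_def ray_def inj_def qg_V_def qg_rayE_def)

subsection \<open>Ascending cyclically directed quarter-grid\<close>

lemma qg_rayE_subset_acq_E: "qg_rayE \<subseteq> acq_E"
  by (auto simp: acq_E_def)

lemma acq_arc_1_2: "odd j \<Longrightarrow> ((1, j), (2, j)) \<in> acq_E"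
  and acq_arc_down: "2 \<le> i \<Longrightarrow> odd j \<Longrightarrow> ((i, j + 3), (i + 1, j)) \<in> acq_E"
  and acq_arc_to_row_1: "2 \<le> i \<Longrightarrow> ((i, 2), (1, 2 * (i - 1))) \<in> acq_E"
  unfolding acq_E_def by blast+

lemma acq_step_down:
  assumes "2 \<le> r" "odd c" "(r, c + 2) \<in> grid_beyond N" "(r + 1, c) \<in> grid_beyond N"
  shows "((r, c + 2), (r + 1, c)) \<in> (Restr acq_E (grid_beyond N))\<^sup>*"
proof -
  have "((r, c + 2), (r, c + 3)) \<in> (Restr acq_E (grid_beyond N))\<^sup>*"
    using assms(3) by (intro row_reach qg_rayE_subset_acq_E) auto
  also have "((r, c + 3), (r + 1, c)) \<in> (Restr acq_E (grid_beyond N))\<^sup>*"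
    using assms by (intro rtrancl_Restr_arc acq_arc_down) auto
  finally show ?thesis .
qed

lemma acq_staircase:
  assumes "2 \<le> r" "odd b" "\<And>s. s \<le> t \<Longrightarrow> N < r + s \<or> N < b + 2 * (t - s)"
  shows "((r, b + 2 * t), (r + t, b)) \<in> (Restr acq_E (grid_beyond N))\<^sup>*"
proof -
  have "((r + s, b + 2 * (t - s)), (r + Suc s, b + 2 * (t - Suc s))) \<in> (Restr acq_E (grid_beyond N))\<^sup>*"
    if "s < t" for s
  proof -
    have "b + 2 * (t - s) = b + 2 * (t - Suc s) + 2"
      using that by simp
    then show ?thesis
      using acq_step_down[of "r + s" "b + 2 * (t - Suc s)" N] assms(1,2) assms(3)[of s] assms(3)[of "Suc s"]
        that odd_pos[OF assms(2)]
      by auto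
  qed
  then show ?thesis
    using rtrancl_chain[of 0 t "\<lambda>s. (r + s, b + 2 * (t - s))"]
    by simp
qed

lemma acq_reaches_row_1:
  assumes "(i, j) \<in> grid_beyond (3*N+3)"
  shows "\<exists>c0. \<forall>c\<ge>c0. ((i, j), (1, c)) \<in> (Restr acq_E (grid_beyond N))\<^sup>*"
proof (cases "i = 1")
  case True
  then show ?thesis
    using assms row_reach[OF qg_rayE_subset_acq_E, of 1 j N] by auto
next
  case False
  define t where "t = j div 2"
  have i: "2 \<le> i" and t: "j \<le> 1 + 2 * t" "1 + 2 * t \<le> j + 1"
    using assms False by (auto simp: t_def)
  have far: "N < i + s \<or> N < 1 + 2 * (t - s)" if "s \<le> t" for s
    using assms that t by auto
  have "N < i + t"
    using assms t by auto
  have "((i, j), (i, 1 + 2 * t)) \<in> (Restr acq_E (grid_beyond N))\<^sup>*"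
    using assms t by (intro row_reach qg_rayE_subset_acq_E) auto
  also have "((i, 1 + 2 * t), (i + t, 1)) \<in> (Restr acq_E (grid_beyond N))\<^sup>*"
    using acq_staircase[of i 1 t N] i far by simp
  also have "((i + t, 1), (i + t, 2)) \<in> (Restr acq_E (grid_beyond N))\<^sup>*"
    using \<open>N < i + t\<close> i by (intro row_reach qg_rayE_subset_acq_E) auto
  also have "((i + t, 2), (1, 2 * (i + t - 1))) \<in> (Restr acq_E (grid_beyond N))\<^sup>*"
    using \<open>N < i + t\<close> i by (intro rtrancl_Restr_arc acq_arc_to_row_1) auto
  finally have to_row: "((i, j), (1, 2 * (i + t - 1))) \<in> (Restr acq_E (grid_beyond N))\<^sup>*" .
  have "((1, 2 * (i + t - 1)), (1, c)) \<in> (Restr acq_E (grid_beyond N))\<^sup>*"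
    if "2 * (i + t - 1) \<le> c" for c
    using \<open>N < i + t\<close> i that by (intro row_reach qg_rayE_subset_acq_E) auto
  with to_row show ?thesis
    by (meson rtrancl_trans)
qed

lemma acq_reached_from_row_1:
  assumes "(i, j) \<in> grid_beyond (3*N+3)"
  shows "\<exists>c. i + j \<le> 2*c + 5 \<and> ((1, c), (i, j)) \<in> (Restr acq_E (grid_beyond N))\<^sup>*"
proof (cases "i = 1")
  case True
  then show ?thesis
    by (intro exI[of _ j]) auto
next
  case False
  define b where "b = (if odd j then j else j - 1)"
  define t where "t = i - 2"
  have i: "i = 2 + t" and b: "odd b" "1 \<le> b" "b \<le> j" "j \<le> b + 1"
    using assms False by (auto simp: b_def t_def elim: oddE)
  have far: "N < 2 + s \<or> N < b + 2 * (t - s)" if "s \<le> t" for s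
    using assms that i b by auto
  have "N < b + 2 * t"
    using assms i b by auto
  then have "((1, b + 2 * t), (2, b + 2 * t)) \<in> (Restr acq_E (grid_beyond N))\<^sup>*"
    using b by (intro rtrancl_Restr_arc acq_arc_1_2) auto
  also have "((2, b + 2 * t), (i, b)) \<in> (Restr acq_E (grid_beyond N))\<^sup>*"
    using acq_staircase[of 2 b t N] b far i by simp
  also have "((i, b), (i, j)) \<in> (Restr acq_E (grid_beyond N))\<^sup>*"
    using far[of t] i b by (intro row_reach qg_rayE_subset_acq_E) auto
  finally show ?thesis
    using i b by (intro exI[of _ "b + 2 * t"]) auto
qed

lemma acq_card_ends: "card (ends qg_V acq_E) = 1"
  using qg_rayE_subset_acq_E
  by (intro card_ends_eq_1_if_far_reachable[OF _ _ reach_far_if_linked_to_row_1[OF acq_reaches_row_1 acq_reached_from_row_1]])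
    (auto simp: grid_beyond_def dest: row_1_ray_qg_V)

subsection \<open>Descending cyclically directed quarter-grid\<close>

lemma qg_rayE_subset_dcq_E: "qg_rayE \<subseteq> dcq_E"
  by (auto simp: dcq_E_def)

lemma dcq_arc_up: "1 \<le> i \<Longrightarrow> 1 \<le> j \<Longrightarrow> even j \<Longrightarrow> ((i + 1, j), (i, j + 1)) \<in> dcq_E"
  and dcq_arc_from_row_1: "1 \<le> i \<Longrightarrow> ((1, 2 * i), (i + 1, 1)) \<in> dcq_E"
  unfolding dcq_E_def by blast+

lemma dcq_step_up:
  assumes "1 \<le> r" "even c" "2 \<le> c" "(r + 1, c) \<in> grid_beyond N" "(r, c + 1) \<in> grid_beyond N"
  shows "((r + 1, c), (r, c + 2)) \<in> (Restr dcq_E (grid_beyond N))\<^sup>*"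
proof -
  have "((r + 1, c), (r, c + 1)) \<in> (Restr dcq_E (grid_beyond N))\<^sup>*"
    using assms by (intro rtrancl_Restr_arc dcq_arc_up) auto
  also have "((r, c + 1), (r, c + 2)) \<in> (Restr dcq_E (grid_beyond N))\<^sup>*"
    using assms(5) by (intro row_reach qg_rayE_subset_dcq_E) auto
  finally show ?thesis .
qed

lemma dcq_staircase:
  assumes "1 \<le> r" "even e" "2 \<le> e" "\<And>s. s \<le> t \<Longrightarrow> N < r + s \<or> N + 1 < e + 2 * (t - s)"
  shows "((r + t, e), (r, e + 2 * t)) \<in> (Restr dcq_E (grid_beyond N))\<^sup>*"
proof -
  have "((r + (t - s), e + 2 * s), (r + (t - Suc s), e + 2 * Suc s)) \<in> (Restr dcq_E (grid_beyond N))\<^sup>*"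
    if "s < t" for s
  proof -
    have "r + (t - s) = r + (t - Suc s) + 1" "e + 2 * Suc s = e + 2 * s + 2"
      using that by simp_all
    moreover have "t - (t - s) = s" "t - (t - Suc s) = Suc s"
      using that by simp_all
    ultimately show ?thesis
      using dcq_step_up[of "r + (t - Suc s)" "e + 2 * s" N] assms(1-3)
        assms(4)[of "t - s"] assms(4)[of "t - Suc s"]
      by auto
  qed
  then show ?thesis
    using rtrancl_chain[of 0 t "\<lambda>s. (r + (t - s), e + 2 * s)"] by simp
qed

lemma dcq_reaches_row_1:
  assumes "(i, j) \<in> grid_beyond (3*N+3)"
  shows "\<exists>c0. \<forall>c\<ge>c0. ((i, j), (1, c)) \<in> (Restr dcq_E (grid_beyond N))\<^sup>*"
proof -
  define e where "e = 2 * ((j + 1) div 2)"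
  have i: "1 \<le> i" and e: "even e" "2 \<le> e" "j \<le> e" "e \<le> j + 1"
    using assms by (auto simp: e_def)
  have far: "N < 1 + s \<or> N + 1 < e + 2 * (i - 1 - s)" if "s \<le> i - 1" for s
    using assms that e by auto
  have "((i, j), (i, e)) \<in> (Restr dcq_E (grid_beyond N))\<^sup>*"
    using assms e by (intro row_reach qg_rayE_subset_dcq_E) auto
  also have "((i, e), (1, e + 2 * (i - 1))) \<in> (Restr dcq_E (grid_beyond N))\<^sup>*"
    using dcq_staircase[of 1 e "i - 1" N] i e far by simp
  finally have to_row: "((i, j), (1, e + 2 * (i - 1))) \<in> (Restr dcq_E (grid_beyond N))\<^sup>*" .
  have "((1, e + 2 * (i - 1)), (1, c)) \<in> (Restr dcq_E (grid_beyond N))\<^sup>*"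
    if "e + 2 * (i - 1) \<le> c" for c
    using far[of 0] e that by (intro row_reach qg_rayE_subset_dcq_E) auto
  with to_row show ?thesis
    by (meson rtrancl_trans)
qed

lemma dcq_reached_from_row_1:
  assumes "(i, j) \<in> grid_beyond (3*N+3)"
  shows "\<exists>c. i + j \<le> 2*c + 5 \<and> ((1, c), (i, j)) \<in> (Restr dcq_E (grid_beyond N))\<^sup>*"
proof -
  consider "i = 1" | "2 \<le> i" "j = 1" | "2 \<le> i" "2 \<le> j"
    using assms by force
  then show ?thesis
  proof cases
    case 1
    then show ?thesis
      by (intro exI[of _ j]) auto
  next
    case 2
    with assms have "((1, 2 * (i - 1)), (i, j)) \<in> (Restr dcq_E (grid_beyond N))\<^sup>*"
      using dcq_arc_from_row_1[of "i - 1"] by (intro rtrancl_Restr_arc) auto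
    with 2 show ?thesis
      by (intro exI[of _ "2 * (i - 1)"]) auto
  next
    case 3
    define t where "t = (j - 2) div 2"
    have t: "2 + 2 * t \<le> j" "j \<le> 3 + 2 * t"
      using 3 by (auto simp: t_def)
    have far: "N < i + s \<or> N + 1 < 2 + 2 * (t - s)" if "s \<le> t" for s
      using assms that t by auto
    have "N < i + t"
      using assms t by auto
    have "((1, 2 * (i + t - 1)), (i + t, 1)) \<in> (Restr dcq_E (grid_beyond N))\<^sup>*"
      using \<open>N < i + t\<close> 3 dcq_arc_from_row_1[of "i + t - 1"] by (intro rtrancl_Restr_arc) auto
    also have "((i + t, 1), (i + t, 2)) \<in> (Restr dcq_E (grid_beyond N))\<^sup>*"
      using \<open>N < i + t\<close> 3 by (intro row_reach qg_rayE_subset_dcq_E) auto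
    also have "((i + t, 2), (i, 2 + 2 * t)) \<in> (Restr dcq_E (grid_beyond N))\<^sup>*"
      using dcq_staircase[of i 2 t N] 3 far by simp
    also have "((i, 2 + 2 * t), (i, j)) \<in> (Restr dcq_E (grid_beyond N))\<^sup>*"
      using far[of 0] 3 t by (intro row_reach qg_rayE_subset_dcq_E) auto
    finally show ?thesis
      using 3 t by (intro exI[of _ "2 * (i + t - 1)"]) auto
  qed
qed

lemma dcq_card_ends: "card (ends qg_V dcq_E) = 1"
  using qg_rayE_subset_dcq_E
  by (intro card_ends_eq_1_if_far_reachable[OF _ _ reach_far_if_linked_to_row_1[OF dcq_reaches_row_1 dcq_reached_from_row_1]])
    (auto simp: grid_beyond_def dest: row_1_ray_qg_V)

subsection \<open>Bidirected quarter-grid\<close>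

lemma rtrancl_Restr_imp_suppress_E_walk:
  assumes W: "W \<subseteq> V" and u: "u \<in> W - S" and "(u, w) \<in> (Restr E W)\<^sup>*"
  shows "\<exists>w' xs. (u, w') \<in> (Restr (suppress_E V E S) (W - S))\<^sup>* \<and> w' \<in> W - S \<and>
    set xs \<subseteq> S \<and> walk_arcs E (w' # xs) \<and> w = last (w' # xs)"
  using assms(3)
proof (induction rule: rtrancl_induct)
  case base
  show ?case
    using u by (intro exI[of _ u] exI[of _ "[]"]) simp
next
  case (step w y)
  let ?T = "Restr (suppress_E V E S) (W - S)"
  obtain w' xs where w': "(u, w') \<in> ?T\<^sup>*" "w' \<in> W - S" "set xs \<subseteq> S"
    "walk_arcs E (w' # xs)" "w = last (w' # xs)"
    using step.IH by blast
  have walk: "walk_arcs E (w' # xs @ [y])"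
    using w'(4,5) step.hyps(2) walk_arcs_append[of E "w' # xs" "[y]"] by simp
  show ?case
  proof (cases "y \<in> S")
    case True
    with w' walk show ?thesis
      by (intro exI[of _ w'] exI[of _ "xs @ [y]"]) auto
  next
    case False
    with w' walk W step.hyps(2) have "(w', y) \<in> ?T"
      unfolding suppress_E_def by auto
    with w'(1) have "(u, y) \<in> ?T\<^sup>*"
      by (rule rtrancl_into_rtrancl)
    with False step.hyps(2) show ?thesis
      by (intro exI[of _ y] exI[of _ "[]"]) auto
  qed
qed

lemma rtrancl_Restr_suppress_E:
  assumes "W \<subseteq> V" "(u, v) \<in> (Restr E W)\<^sup>*" "u \<notin> S" "v \<notin> S"
  shows "(u, v) \<in> (Restr (suppress_E V E S) (W - S))\<^sup>*"
proof (cases "u = v")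
  case False
  then have "u \<in> W"
    using assms(2) by (auto elim: converse_rtranclE)
  then obtain w' xs where "(u, w') \<in> (Restr (suppress_E V E S) (W - S))\<^sup>*"
    "set xs \<subseteq> S" "v = last (w' # xs)"
    using rtrancl_Restr_imp_suppress_E_walk[OF assms(1) _ assms(2)] assms(3) by blast
  moreover have "xs = []"
    using calculation \<open>v \<notin> S\<close> by (metis last.simps last_in_set subsetD)
  ultimately show ?thesis
    by simp
qed simp

lemma qg_rayE_subset_bqg0_E: "qg_rayE \<subseteq> bqg0_E"
  by (auto simp: bqg0_E_def)

lemma bqg0_arc_down: "1 \<le> i \<Longrightarrow> ((i, 4 * k + 7), (i + 1, 4 * k + 1)) \<in> bqg0_E"
  and bqg0_arc_up: "1 \<le> i \<Longrightarrow> ((i + 1, 4 * k + 2), (i, 4 * k + 8)) \<in> bqg0_E"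
  unfolding bqg0_E_def by blast+

lemma bqg0_step_down:
  assumes "1 \<le> r" "(r, 4 * k + 7) \<in> grid_beyond N" "(r + 1, 4 * k + 1) \<in> grid_beyond N"
  shows "((r, 4 * k + 7), (r + 1, 4 * k + 3)) \<in> (Restr bqg0_E (grid_beyond N))\<^sup>*"
proof -
  have "((r, 4 * k + 7), (r + 1, 4 * k + 1)) \<in> (Restr bqg0_E (grid_beyond N))\<^sup>*"
    using assms by (intro rtrancl_Restr_arc bqg0_arc_down)
  also have "((r + 1, 4 * k + 1), (r + 1, 4 * k + 3)) \<in> (Restr bqg0_E (grid_beyond N))\<^sup>*"
    using assms(3) by (intro row_reach qg_rayE_subset_bqg0_E) auto
  finally show ?thesis .
qed

lemma bqg0_step_up:
  assumes "1 \<le> r" "(r + 1, 4 * k + 2) \<in> grid_beyond N" "(r, 4 * k + 8) \<in> grid_beyond N"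
  shows "((r + 1, 4 * k + 2), (r, 4 * k + 10)) \<in> (Restr bqg0_E (grid_beyond N))\<^sup>*"
proof -
  have "((r + 1, 4 * k + 2), (r, 4 * k + 8)) \<in> (Restr bqg0_E (grid_beyond N))\<^sup>*"
    using assms by (intro rtrancl_Restr_arc bqg0_arc_up)
  also have "((r, 4 * k + 8), (r, 4 * k + 10)) \<in> (Restr bqg0_E (grid_beyond N))\<^sup>*"
    using assms(3) by (intro row_reach qg_rayE_subset_bqg0_E) auto
  finally show ?thesis .
qed

lemma bqg0_staircase_down:
  assumes "1 \<le> r" "\<And>s. s \<le> t \<Longrightarrow> N < r + s \<or> N + 2 < 4 * m + 3 + 4 * (t - s)"
  shows "((r, 4 * m + 3 + 4 * t), (r + t, 4 * m + 3)) \<in> (Restr bqg0_E (grid_beyond N))\<^sup>*"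
proof -
  have "((r + s, 4 * m + 3 + 4 * (t - s)), (r + Suc s, 4 * m + 3 + 4 * (t - Suc s)))
      \<in> (Restr bqg0_E (grid_beyond N))\<^sup>*" if "s < t" for s
  proof -
    define k where "k = m + (t - Suc s)"
    have k: "4 * m + 3 + 4 * (t - s) = 4 * k + 7" "4 * m + 3 + 4 * (t - Suc s) = 4 * k + 3"
      using that by (simp_all add: k_def)
    have "(r + s, 4 * k + 7) \<in> grid_beyond N" "(r + s + 1, 4 * k + 1) \<in> grid_beyond N"
      using assms(1) assms(2)[of s] assms(2)[of "Suc s"] that k by auto
    then show ?thesis
      unfolding k using bqg0_step_down[of "r + s" k N] assms(1) by simp
  qed
  then show ?thesis
    using rtrancl_chain[of 0 t "\<lambda>s. (r + s, 4 * m + 3 + 4 * (t - s))"] by simp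
qed

lemma bqg0_staircase_up:
  assumes "1 \<le> r" "\<And>s. s \<le> t \<Longrightarrow> N < r + s \<or> N + 2 < 4 * m + 2 + 8 * (t - s)"
  shows "((r + t, 4 * m + 2), (r, 4 * m + 2 + 8 * t)) \<in> (Restr bqg0_E (grid_beyond N))\<^sup>*"
proof -
  have "((r + t - s, 4 * m + 2 + 8 * s), (r + t - Suc s, 4 * m + 2 + 8 * Suc s))
      \<in> (Restr bqg0_E (grid_beyond N))\<^sup>*" if "s < t" for s
  proof -
    have "(r + t - Suc s + 1, 4 * (m + 2 * s) + 2) \<in> grid_beyond N"
      "(r + t - Suc s, 4 * (m + 2 * s) + 8) \<in> grid_beyond N"
      using assms(1) assms(2)[of "t - s"] assms(2)[of "t - Suc s"] that by auto
    then have "((r + t - Suc s + 1, 4 * (m + 2 * s) + 2), (r + t - Suc s, 4 * (m + 2 * s) + 10))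
        \<in> (Restr bqg0_E (grid_beyond N))\<^sup>*"
      using assms(1) that by (intro bqg0_step_up) auto
    moreover have "r + t - Suc s + 1 = r + t - s" "4 * (m + 2 * s) + 2 = 4 * m + 2 + 8 * s"
      "4 * (m + 2 * s) + 10 = 4 * m + 2 + 8 * Suc s"
      using that by simp_all
    ultimately show ?thesis
      by metis
  qed
  then show ?thesis
    using rtrancl_chain[of 0 t "\<lambda>s. (r + t - s, 4 * m + 2 + 8 * s)"] by simp
qed

lemma bqg0_reaches_row_1:
  assumes "(i, j) \<in> grid_beyond (3*N+3)"
  shows "\<exists>c0. \<forall>c\<ge>c0. ((i, j), (1, c)) \<in> (Restr bqg0_E (grid_beyond N))\<^sup>*"
proof -
  define m where "m = (j + 1) div 4"
  have i: "1 \<le> i" and m: "j \<le> 4 * m + 2"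
    using assms by (auto simp: m_def)
  have far: "N < 1 + s \<or> N + 2 < 4 * m + 2 + 8 * (i - 1 - s)" if "s \<le> i - 1" for s
    using assms that m by auto
  have "((i, j), (i, 4 * m + 2)) \<in> (Restr bqg0_E (grid_beyond N))\<^sup>*"
    using assms m by (intro row_reach qg_rayE_subset_bqg0_E) auto
  also have "((i, 4 * m + 2), (1, 4 * m + 2 + 8 * (i - 1))) \<in> (Restr bqg0_E (grid_beyond N))\<^sup>*"
    using bqg0_staircase_up[of 1 "i - 1" N m] i far by simp
  finally have to_row: "((i, j), (1, 4 * m + 2 + 8 * (i - 1))) \<in> (Restr bqg0_E (grid_beyond N))\<^sup>*" .
  have "((1, 4 * m + 2 + 8 * (i - 1)), (1, c)) \<in> (Restr bqg0_E (grid_beyond N))\<^sup>*"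
    if "4 * m + 2 + 8 * (i - 1) \<le> c" for c
    using far[of 0] that by (intro row_reach qg_rayE_subset_bqg0_E) auto
  with to_row show ?thesis
    by (meson rtrancl_trans)
qed

lemma bqg0_reached_from_row_1:
  assumes "(i, j) \<in> grid_beyond (3*N+3)"
  shows "\<exists>c. i + j \<le> 2*c + 5 \<and> ((1, c), (i, j)) \<in> (Restr bqg0_E (grid_beyond N))\<^sup>*"
proof (cases "i = 1")
  case True
  then show ?thesis
    by (intro exI[of _ j]) auto
next
  case False
  define m where "m = (j - 1) div 4"
  have i: "2 \<le> i" and m: "4 * m + 1 \<le> j" "j \<le> 4 * m + 4"
    using assms False by (auto simp: m_def)
  have far: "N < 1 + s \<or> N + 2 < 4 * (m + 1) + 3 + 4 * (i - 2 - s)" if "s \<le> i - 2" for s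
    using assms that m by auto
  have "((1, 4 * (m + 1) + 3 + 4 * (i - 2)), (1 + (i - 2), 4 * (m + 1) + 3))
      \<in> (Restr bqg0_E (grid_beyond N))\<^sup>*"
    using far by (intro bqg0_staircase_down) auto
  moreover have "1 + (i - 2) = i - 1" "4 * (m + 1) + 3 = 4 * m + 7"
    using i by simp_all
  ultimately have "((1, 4 * (m + 1) + 3 + 4 * (i - 2)), (i - 1, 4 * m + 7))
      \<in> (Restr bqg0_E (grid_beyond N))\<^sup>*"
    by metis
  also have "((i - 1, 4 * m + 7), (i, 4 * m + 1)) \<in> (Restr bqg0_E (grid_beyond N))\<^sup>*"
    using far[of "i - 2"] bqg0_arc_down[of "i - 1" m] assms i m by (intro rtrancl_Restr_arc) auto
  also have "((i, 4 * m + 1), (i, j)) \<in> (Restr bqg0_E (grid_beyond N))\<^sup>*"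
    using assms i m by (intro row_reach qg_rayE_subset_bqg0_E) auto
  finally show ?thesis
    using i m by (intro exI[of _ "4 * (m + 1) + 3 + 4 * (i - 2)"]) auto
qed

lemma bqg_row_2_not_suppressed:
  assumes "5 \<le> j"
  shows "(2, j) \<notin> bqg_S"
proof -
  define m r where "m = j div 4" and "r = j mod 4"
  then have j: "j = 4 * m + r" "r < 4"
    by simp_all
  have "\<exists>u. ((u, (2, j)) \<in> bqg0_E \<or> ((2, j), u) \<in> bqg0_E) \<and> fst u \<noteq> 2"
  proof -
    consider "r = 0" | "r = 1" | "r = 2" | "r = 3"
      using j(2) by linarith
    then show ?thesis
    proof cases
      case 1
      with assms j have "((3, 4 * (m - 2) + 2), (2, j)) \<in> bqg0_E"
        unfolding bqg0_E_def by (auto intro!: exI[of _ 2] exI[of _ "m - 2"])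
      then show ?thesis by fastforce
    next
      case 2
      with j have "((1, 4 * m + 7), (2, j)) \<in> bqg0_E"
        unfolding bqg0_E_def by (auto intro!: exI[of _ 1] exI[of _ m])
      then show ?thesis by fastforce
    next
      case 3
      with j have "((2, j), (1, 4 * m + 8)) \<in> bqg0_E"
        unfolding bqg0_E_def by (auto intro!: exI[of _ 1] exI[of _ m])
      then show ?thesis by fastforce
    next
      case 4
      with assms j have "((2, j), (3, 4 * (m - 1) + 1)) \<in> bqg0_E"
        unfolding bqg0_E_def by (auto intro!: exI[of _ 2] exI[of _ "m - 1"])
      then show ?thesis by fastforce
    qed
  qed
  then show ?thesis
    unfolding bqg_S_def by auto
qed

lemma bqg_row_2_ray: "(True, \<lambda>n. (2, n + 5)) \<in> rays_antirays bqg_V bqg_E"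
proof -
  have in_V: "(2, n + 5) \<in> bqg_V" for n
    using bqg_row_2_not_suppressed[of "n + 5"] by (simp add: bqg_V_def suppress_V_def qg_V_def)
  have "((2, n + 5), (2, Suc n + 5)) \<in> bqg0_E" for n
    by (rule subsetD[OF qg_rayE_subset_bqg0_E]) (auto simp: qg_rayE_def)
  then have "((2, n + 5), (2, Suc n + 5)) \<in> bqg_E" for n
    using in_V[of n] in_V[of "Suc n"]
    unfolding bqg_E_def suppress_E_def bqg_V_def suppress_V_def
    by (auto intro!: exI[of _ "[]"])
  with in_V show ?thesis
    by (auto simp: rays_antirays_def ray_def inj_def)
qed

lemma bqg_card_ends: "card (ends bqg_V bqg_E) = 1"
proof (rule card_ends_eq_1_if_far_reachable[OF _ _ reach_far_if_linked_to_row_1[OF bqg0_reaches_row_1 bqg0_reached_from_row_1]])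
  show "bqg_V \<subseteq> qg_V"
    by (simp add: bqg_V_def suppress_V_def)
  show "rays_antirays bqg_V bqg_E \<noteq> {}"
    using bqg_row_2_ray by blast
  fix N u v
  assume "u \<in> bqg_V" "v \<in> bqg_V" "(u, v) \<in> (Restr bqg0_E (grid_beyond N))\<^sup>*"
  moreover have "bqg_V - {..N} \<times> {..N} = grid_beyond N - bqg_S"
    by (auto simp: bqg_V_def suppress_V_def grid_beyond_def)
  ultimately show "(u, v) \<in> (Restr bqg_E (bqg_V - {..N} \<times> {..N}))\<^sup>*"
    unfolding bqg_E_def
    by (auto simp: bqg_V_def suppress_V_def grid_beyond_def intro: rtrancl_Restr_suppress_E)
qed

theorem lemma4p1:
  shows "card (ends bqg_V bqg_E) = 1 \<and>
         card (ends qg_V acq_E) = 1 \<and>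
         card (ends qg_V dcq_E) = 1 \<and>
         (\<forall>(V :: 'a set) E. complete_ray_digraph V E \<longrightarrow> card (ends V E) = 1)"
  using bqg_card_ends acq_card_ends dcq_card_ends card_ends_complete_ray_digraph by blast

end
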